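(* Let $f:\mathbb{R}^n_{>0}\to\mathbb{R}^n_{>0}$ be order-preserving and homogeneous, and let $J\subseteq[n]$. The following are equivalent: (a) there is no nonempty $A\subseteq J$ such that $[n]\setminus A$ is invariant in $\mathcal{H}^-_0(f)$; (b) $\operatorname{reach}([n]\setminus J,\mathcal{H}^-_0(f))=[n]$; (c) $r(f^J_0)=0$. Similarly, the following are equivalent: (d) there is no nonempty $B\subseteq[n]\setminus J$ such that $[n]\setminus B$ is invariant in $\mathcal{H}^+_\infty(f)$; (e) $\operatorname{reach}(J,\mathcal{H}^+_\infty(f))=[n]$; (f) $\lambda(f^{[n]\setminus J}_\infty)=\infty$.
   Context: $[n]=\{1,\dots,n\}$; entrywise order. Order-preserving: $x\le y\Rightarrow f(x)\le f(y)$; homogeneous: $f(tx)=tf(x)$ for $t>0$. $f$ extends continuously to order-preserving homogeneous maps on $\mathbb{R}^n_{\ge0}$ and $(0,\infty]^n$, again denoted $f$. $P^J_\alpha(x)_j=x_j$ for $j\in J$, $\alpha$ otherwise; $f^J_0=P^J_0fP^J_0$, $f^J_\infty=P^J_\infty fP^J_\infty$; $r(g)=\inf_{x\in\mathbb{R}^n_{>0}}\max_ig(x)_i/x_i$, $\lambda(g)=\sup_{x\in\mathbb{R}^n_{>0}}\min_ig(x)_i/x_i$. For $I\subseteq[n]$, $e_I$ is the indicator vector of $I$, $\exp$ is entrywise. $\mathcal{H}^-_0(f)$ and $\mathcal{H}^+_\infty(f)$ are directed hypergraphs on nodes $[n]$ whose hyperarcs are the pairs $(I,\{j\})$ with $I\subseteq[n]$,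 $j\notin I$, and respectively $\lim_{t\to\infty}f(\exp(-te_I))_j=0$, resp. $\lim_{t\to\infty}f(\exp(te_I))_j=\infty$. A set $I\subseteq[n]$ is invariant in a hypergraph if there is no hyperarc $(I',\{j\})$ with $I'\subseteq I$ and $j\notin I$. $\operatorname{reach}(J,\mathcal{H})$ is the smallest invariant set containing $J$. *)

theory Defs
  imports "HOL-Analysis.Analysis"
begin

text \<open>Vectors in R^n are modelled as real^'n for a finite index type 'n; [n] is UNIV.\<close>

definition pos_vec :: "real^'n \<Rightarrow> bool" where
  "pos_vec x \<longleftrightarrow> (\<forall>i. 0 < x $ i)"

definition nonneg_vec :: "real^'n \<Rightarrow> bool" where
  "nonneg_vec x \<longleftrightarrow> (\<forall>i. 0 \<le> x $ i)"

definition order_preserving_pos :: "(real^'n \<Rightarrow> real^'n) \<Rightarrow> bool" where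
  "order_preserving_pos f \<longleftrightarrow>
     (\<forall>x y. pos_vec x \<and> pos_vec y \<and> (\<forall>i. x $ i \<le> y $ i) \<longrightarrow> (\<forall>i. f x $ i \<le> f y $ i))"

definition homogeneous_pos :: "(real^'n \<Rightarrow> real^'n) \<Rightarrow> bool" where
  "homogeneous_pos f \<longleftrightarrow> (\<forall>x t. pos_vec x \<and> 0 < t \<longrightarrow> f (t *\<^sub>R x) = t *\<^sub>R f x)"

text \<open>Continuous extension to the closed cone R^n_{>=0}:
  f(x) = lim_{eps -> 0+} f(x + eps 1) = inf_{eps>0} f(x + eps 1) (monotone in eps).\<close>
definition ext0 :: "(real^'n \<Rightarrow> real^'n) \<Rightarrow> real^'n \<Rightarrow> real^'n" where
  "ext0 f x = (\<chi> i. INF e\<in>{0<..}. f (x + e *\<^sub>R (\<chi> j. 1)) $ i)"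

definition trunc_vec :: "('n \<Rightarrow> ereal) \<Rightarrow> real \<Rightarrow> real^'n" where
  "trunc_vec y t = (\<chi> j. if y j = \<infinity> then t else min (real_of_ereal (y j)) t)"

text \<open>Continuous extension to (0,\<infinity>]^n: f(y) = lim_{t -> \<infinity>} f(min(y, t 1)) = sup_t (monotone in t).\<close>
definition ext_inf :: "(real^'n \<Rightarrow> real^'n) \<Rightarrow> ('n \<Rightarrow> ereal) \<Rightarrow> ('n \<Rightarrow> ereal)" where
  "ext_inf f y = (\<lambda>i. SUP t\<in>{0<..}. ereal (f (trunc_vec y t) $ i))"

definition P0 :: "'n set \<Rightarrow> real^'n \<Rightarrow> real^'n" where
  "P0 J x = (\<chi> j. if j \<in> J then x $ j else 0)"

definition Pinf :: "'n set \<Rightarrow> ('n \<Rightarrow> ereal) \<Rightarrow> ('n \<Rightarrow> ereal)" where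
  "Pinf J y = (\<lambda>j. if j \<in> J then y j else \<infinity>)"

definition f0 :: "'n set \<Rightarrow> (real^'n \<Rightarrow> real^'n) \<Rightarrow> real^'n \<Rightarrow> real^'n" where
  "f0 J f x = P0 J (ext0 f (P0 J x))"

definition finf :: "'n set \<Rightarrow> (real^'n \<Rightarrow> real^'n) \<Rightarrow> real^'n \<Rightarrow> ('n \<Rightarrow> ereal)" where
  "finf J f x = Pinf J (ext_inf f (Pinf J (\<lambda>j. ereal (x $ j))))"

definition upper_cw :: "(real^'n::finite \<Rightarrow> real^'n) \<Rightarrow> real" where
  "upper_cw g = (INF x\<in>{x. pos_vec x}. MAX i\<in>UNIV. g x $ i / x $ i)"

definition lower_cw :: "(real^'n::finite \<Rightarrow> ('n \<Rightarrow> ereal)) \<Rightarrow> ereal" where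
  "lower_cw g = (SUP x\<in>{x. pos_vec x}. MIN i\<in>UNIV. g x i / ereal (x $ i))"

text \<open>Hyperarcs (I,{j}) of H^-_0(f) and H^+_\<infinity>(f).\<close>
definition arc0 :: "(real^'n \<Rightarrow> real^'n) \<Rightarrow> 'n set \<Rightarrow> 'n \<Rightarrow> bool" where
  "arc0 f I j \<longleftrightarrow> j \<notin> I \<and>
     ((\<lambda>t. f (\<chi> k. exp (- t * indicator I k)) $ j) \<longlongrightarrow> 0) at_top"

definition arc_inf :: "(real^'n \<Rightarrow> real^'n) \<Rightarrow> 'n set \<Rightarrow> 'n \<Rightarrow> bool" where
  "arc_inf f I j \<longleftrightarrow> j \<notin> I \<and>
     filterlim (\<lambda>t. f (\<chi> k. exp (t * indicator I k)) $ j) at_top at_top"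

definition invariant_hg :: "('n set \<Rightarrow> 'n \<Rightarrow> bool) \<Rightarrow> 'n set \<Rightarrow> bool" where
  "invariant_hg H I \<longleftrightarrow> \<not> (\<exists>I' j. H I' j \<and> I' \<subseteq> I \<and> j \<notin> I)"

definition reach_hg :: "'n set \<Rightarrow> ('n set \<Rightarrow> 'n \<Rightarrow> bool) \<Rightarrow> 'n set" where
  "reach_hg J H = \<Inter> {I. J \<subseteq> I \<and> invariant_hg H I}"

end

theory Submission
  imports Defs
begin

(* Suppose reach([n] - J, H^-_0(f)) = [n] and grow S from [n] - J one hyperarc (I,{j}) at a time,
   keeping vectors x > 0 that are arbitrarily small on S with f^J_0(x) <= eps x there.  Since
   f(exp(-t e_I))_j -> 0, lowering x_j far enough keeps this property on S + {j}, by monotonicity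
   on the old coordinates.  At S = [n] this gives r(f^J_0) <= eps.  Conversely, if an invariant
   S containing [n] - J misses a coordinate, then f(exp(-t e_S)) stays bounded away from 0 off S,
   uniformly in t; by homogeneity f^J_0(x)_a >= c x_a at a coordinate a outside S where x is
   smallest, so r(f^J_0) >= c > 0.  The statement about H^+_infinity and lambda is the mirror
   image, with truncation at large levels in place of small positive shifts.  The equivalences
   (a) <-> (b) and (d) <-> (e) only say that reach(K) = [n] iff no proper invariant set
   contains K. *)

lemma invariant_reach_hg: "invariant_hg H (reach_hg K H)"
  unfolding invariant_hg_def reach_hg_def by blast

lemma subset_reach_hg: "K \<subseteq> reach_hg K H"
  unfolding reach_hg_def by blast

lemma reach_hg_least: "K \<subseteq> S \<Longrightarrow> invariant_hg H S \<Longrightarrow> reach_hg K H \<subseteq> S"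
  unfolding reach_hg_def by blast

lemma reach_hg_eq_UNIV_iff:
  "reach_hg K H = UNIV \<longleftrightarrow> (\<forall>S. K \<subseteq> S \<longrightarrow> invariant_hg H S \<longrightarrow> S = UNIV)"
proof
  assume "reach_hg K H = UNIV"
  then show "\<forall>S. K \<subseteq> S \<longrightarrow> invariant_hg H S \<longrightarrow> S = UNIV"
    using reach_hg_least[of K _ H] by auto
next
  assume all: "\<forall>S. K \<subseteq> S \<longrightarrow> invariant_hg H S \<longrightarrow> S = UNIV"
  show "reach_hg K H = UNIV" by (rule all[rule_format, OF subset_reach_hg invariant_reach_hg])
qed

lemma reach_hg_eq_UNIV_iff_no_invariant_complement:
  "reach_hg (UNIV - J) H = UNIV \<longleftrightarrow> \<not> (\<exists>A. A \<noteq> {} \<and> A \<subseteq> J \<and> invariant_hg H (UNIV - A))"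
  unfolding reach_hg_eq_UNIV_iff
proof
  assume all: "\<forall>S. UNIV - J \<subseteq> S \<longrightarrow> invariant_hg H S \<longrightarrow> S = UNIV"
  show "\<not> (\<exists>A. A \<noteq> {} \<and> A \<subseteq> J \<and> invariant_hg H (UNIV - A))"
  proof
    assume "\<exists>A. A \<noteq> {} \<and> A \<subseteq> J \<and> invariant_hg H (UNIV - A)"
    then obtain A where A: "A \<noteq> {}" "A \<subseteq> J" "invariant_hg H (UNIV - A)" by blast
    then have "UNIV - J \<subseteq> UNIV - A" by blast
    with all A(3) have "UNIV - A = UNIV" by blast
    with A(1) show False by blast
  qed
next
  assume no_inv: "\<not> (\<exists>A. A \<noteq> {} \<and> A \<subseteq> J \<and> invariant_hg H (UNIV - A))"
  show "\<forall>S. UNIV - J \<subseteq> S \<longrightarrow> invariant_hg H S \<longrightarrow> S = UNIV"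
  proof (intro allI impI)
    fix S assume "UNIV - J \<subseteq> S" "invariant_hg H S"
    then have "UNIV - S \<subseteq> J" "invariant_hg H (UNIV - (UNIV - S))"
      by (auto simp: Diff_Diff_Int)
    with no_inv have "UNIV - S = {}" by auto
    then show "S = UNIV" by auto
  qed
qed

lemma reach_hg_eq_UNIV_induct:
  fixes H :: "'n::finite set \<Rightarrow> 'n \<Rightarrow> bool"
  assumes reach: "reach_hg K H = UNIV" and base: "P K"
    and step: "\<And>S I j. P S \<Longrightarrow> H I j \<Longrightarrow> I \<subseteq> S \<Longrightarrow> j \<notin> S \<Longrightarrow> P (insert j S)"
  shows "P UNIV"
proof -
  have "\<exists>S\<in>{S. K \<subseteq> S \<and> P S}. \<forall>S'\<in>{S. K \<subseteq> S \<and> P S}. S \<subseteq> S' \<longrightarrow> S = S'"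
    by (rule finite_has_maximal) (use base in auto)
  then obtain S where S: "K \<subseteq> S" "P S"
    and maximal: "\<And>S'. K \<subseteq> S' \<Longrightarrow> P S' \<Longrightarrow> S \<subseteq> S' \<Longrightarrow> S = S'"
    by auto
  have "invariant_hg H S"
    unfolding invariant_hg_def
  proof
    assume "\<exists>I j. H I j \<and> I \<subseteq> S \<and> j \<notin> S"
    then obtain I j where "H I j" "I \<subseteq> S" "j \<notin> S" by blast
    then have "S = insert j S" using S by (intro maximal step) auto
    with \<open>j \<notin> S\<close> show False by blast
  qed
  with reach S show ?thesis unfolding reach_hg_eq_UNIV_iff by auto
qed

lemma upper_cw_le:
  fixes g :: "real^'n \<Rightarrow> real^'n"
  assumes nonneg: "\<And>x i. pos_vec x \<Longrightarrow> 0 \<le> g x $ i"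
    and x: "pos_vec x" and le: "\<And>i. g x $ i \<le> c * x $ i"
  shows "upper_cw g \<le> c"
proof -
  have ratio_nonneg: "0 \<le> (MAX i\<in>UNIV. g y $ i / y $ i)" if "pos_vec y" for y
    using nonneg[OF that] that by (simp add: Max_ge_iff pos_vec_def less_imp_le)
  have "upper_cw g \<le> (MAX i\<in>UNIV. g x $ i / x $ i)"
    unfolding upper_cw_def
    by (rule cINF_lower) (use x ratio_nonneg in \<open>auto intro: bdd_belowI2[where m=0]\<close>)
  also have "\<dots> \<le> c"
    using le x by (simp add: Max_le_iff pos_vec_def pos_divide_le_eq mult.commute)
  finally show ?thesis .
qed

lemma upper_cw_ge:
  fixes g :: "real^'n \<Rightarrow> real^'n"
  assumes "\<And>x. pos_vec x \<Longrightarrow> \<exists>i. c * x $ i \<le> g x $ i"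
  shows "c \<le> upper_cw g"
  unfolding upper_cw_def
proof (rule cINF_greatest)
  show "{x. pos_vec x} \<noteq> {}"
    using pos_vec_def[of "\<chi> j. 1"] by auto
  fix x :: "real^'n" assume "x \<in> {x. pos_vec x}"
  then show "c \<le> (MAX i\<in>UNIV. g x $ i / x $ i)"
    using assms by (force simp: Max_ge_iff pos_vec_def pos_le_divide_eq mult.commute)
qed

lemma lower_cw_ge:
  fixes g :: "real^'n \<Rightarrow> ('n \<Rightarrow> ereal)"
  assumes "pos_vec x" and "\<And>i. ereal (c * x $ i) \<le> g x i"
  shows "ereal c \<le> lower_cw g"
proof -
  have "ereal c \<le> (MIN i\<in>UNIV. g x i / ereal (x $ i))"
    using assms by (simp add: Min_ge_iff pos_vec_def ereal_le_divide_pos mult.commute)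
  also have "\<dots> \<le> lower_cw g"
    unfolding lower_cw_def by (rule SUP_upper) (use assms(1) in simp)
  finally show ?thesis .
qed

lemma lower_cw_le:
  fixes g :: "real^'n \<Rightarrow> ('n \<Rightarrow> ereal)"
  assumes "\<And>x. pos_vec x \<Longrightarrow> \<exists>i. g x i \<le> ereal (c * x $ i)"
  shows "lower_cw g \<le> ereal c"
  unfolding lower_cw_def
proof (rule SUP_least)
  fix x :: "real^'n" assume "x \<in> {x. pos_vec x}"
  then show "(MIN i\<in>UNIV. g x i / ereal (x $ i)) \<le> ereal c"
    using assms by (force simp: Min_le_iff pos_vec_def ereal_divide_le_pos mult.commute)
qed

locale order_preserving_homogeneous =
  fixes f :: "real^'n \<Rightarrow> real^'n"
  assumes pos: "\<And>x. pos_vec x \<Longrightarrow> pos_vec (f x)"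
    and order_preserving: "order_preserving_pos f"
    and homogeneous: "homogeneous_pos f"
begin

lemma mono_nth: "pos_vec x \<Longrightarrow> pos_vec y \<Longrightarrow> (\<And>k. x $ k \<le> y $ k) \<Longrightarrow> f x $ i \<le> f y $ i"
  using order_preserving unfolding order_preserving_pos_def by blast

lemma homogeneous_nth: "pos_vec x \<Longrightarrow> 0 < t \<Longrightarrow> f (t *\<^sub>R x) $ i = t * f x $ i"
  using homogeneous unfolding homogeneous_pos_def by simp

lemma pos_nth: "pos_vec x \<Longrightarrow> 0 < f x $ i"
  using pos unfolding pos_vec_def by blast

end

lemma f0_nth: "f0 J f x $ i = (if i \<in> J then ext0 f (P0 J x) $ i else 0)"
  by (simp add: f0_def P0_def)

lemma nonneg_P0: "pos_vec x \<Longrightarrow> nonneg_vec (P0 J x)"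
  unfolding pos_vec_def nonneg_vec_def P0_def by (simp add: less_imp_le)

lemma pos_vec_shift: "nonneg_vec y \<Longrightarrow> 0 < e \<Longrightarrow> pos_vec (y + e *\<^sub>R (\<chi> j. 1))"
  unfolding pos_vec_def nonneg_vec_def by (simp add: add_nonneg_pos)

lemma arc0_smallE:
  assumes "arc0 f I j" and "0 < a"
  obtains t where "0 \<le> t" "f (\<chi> k. exp (- t * indicator I k)) $ j < a"
proof -
  have "((\<lambda>t. f (\<chi> k. exp (- t * indicator I k)) $ j) \<longlongrightarrow> 0) at_top"
    using assms(1) by (simp add: arc0_def)
  from order_tendstoD(2)[OF this assms(2)]
  obtain N where N: "\<And>t. N \<le> t \<Longrightarrow> f (\<chi> k. exp (- t * indicator I k)) $ j < a"
    unfolding eventually_at_top_linorder by blast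
  have "N \<le> max N 0" "0 \<le> max N 0" by simp_all
  with N that show thesis by blast
qed


(* Coordinates off S are pinned at 1/2, strictly below the value 1 that exp(-t e_I) takes
   there, which leaves room for the positive shift in the definition of ext0. *)
definition f0_vanishing_on :: "(real^'n \<Rightarrow> real^'n) \<Rightarrow> 'n set \<Rightarrow> 'n set \<Rightarrow> bool" where
  "f0_vanishing_on f J S \<longleftrightarrow> (\<forall>\<epsilon>>0. \<forall>\<delta>>0. \<exists>x. pos_vec x \<and> (\<forall>i. i \<notin> S \<longrightarrow> x $ i = 1/2) \<and>
     (\<forall>i\<in>S. x $ i \<le> \<delta> \<and> f0 J f x $ i \<le> \<epsilon> * x $ i))"

lemma f0_vanishing_on_complement: "f0_vanishing_on f J (UNIV - J)"
  unfolding f0_vanishing_on_def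
proof (intro allI impI)
  fix \<epsilon> \<delta> :: real assume "0 < \<epsilon>" "0 < \<delta>"
  then show "\<exists>x. pos_vec x \<and> (\<forall>i. i \<notin> UNIV - J \<longrightarrow> x $ i = 1/2) \<and>
      (\<forall>i\<in>UNIV - J. x $ i \<le> \<delta> \<and> f0 J f x $ i \<le> \<epsilon> * x $ i)"
    by (intro exI[of _ "\<chi> i. if i \<in> J then 1/2 else min \<delta> (1/2)"])
      (auto simp: pos_vec_def f0_def P0_def)
qed

context order_preserving_homogeneous
begin

lemma ext0_le: "nonneg_vec y \<Longrightarrow> 0 < e \<Longrightarrow> ext0 f y $ i \<le> f (y + e *\<^sub>R (\<chi> j. 1)) $ i"
  unfolding ext0_def
  by (simp, rule cINF_lower) (auto intro!: bdd_belowI2[where m=0] less_imp_le pos_nth pos_vec_shift)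

lemma ext0_ge: "(\<And>e. 0 < e \<Longrightarrow> c \<le> f (y + e *\<^sub>R (\<chi> j. 1)) $ i) \<Longrightarrow> c \<le> ext0 f y $ i"
  unfolding ext0_def by (simp, rule cINF_greatest) auto

lemma ext0_ge_scaled:
  assumes y: "nonneg_vec y" and m: "0 < m" and y_ge: "\<And>k. k \<notin> S \<Longrightarrow> m \<le> y $ k"
    and c: "\<And>t. c \<le> f (\<chi> k. exp (- t * indicator S k)) $ i"
  shows "m * c \<le> ext0 f y $ i"
proof (rule ext0_ge)
  fix e :: real assume e: "0 < e"
  define z :: "real^'n" where "z = (\<chi> k. exp (- ln (m / e) * indicator S k))"
  have z: "pos_vec z" by (simp add: z_def pos_vec_def)
  have "m * c \<le> m * f z $ i" using c[of "ln (m / e)"] m by (simp add: z_def)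
  also have "\<dots> = f (m *\<^sub>R z) $ i" using homogeneous_nth[OF z m] by simp
  also have "\<dots> \<le> f (y + e *\<^sub>R (\<chi> j. 1)) $ i"
  proof (rule mono_nth)
    show "pos_vec (m *\<^sub>R z)" using z m by (simp add: pos_vec_def)
    show "pos_vec (y + e *\<^sub>R (\<chi> j. 1))" by (rule pos_vec_shift[OF y e])
    fix k
    show "(m *\<^sub>R z) $ k \<le> (y + e *\<^sub>R (\<chi> j. 1)) $ k"
    proof (cases "k \<in> S")
      case True
      then show ?thesis using y m e by (simp add: z_def nonneg_vec_def exp_minus)
    next
      case False
      then show ?thesis using y_ge[of k] e by (simp add: z_def)
    qed
  qed
  finally show "m * c \<le> f (y + e *\<^sub>R (\<chi> j. 1)) $ i" .
qed

lemma f0_nonneg: "pos_vec x \<Longrightarrow> 0 \<le> f0 J f x $ i"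
  using ext0_ge[of 0 "P0 J x" i] pos_nth pos_vec_shift[OF nonneg_P0]
  by (force simp: f0_nth less_imp_le)

lemma f0_le_shift: "pos_vec x \<Longrightarrow> 0 < e \<Longrightarrow> f0 J f x $ i \<le> f (P0 J x + e *\<^sub>R (\<chi> j. 1)) $ i"
  using ext0_le[OF nonneg_P0] pos_nth[OF pos_vec_shift[OF nonneg_P0]]
  by (force simp: f0_nth less_imp_le)

lemma f0_mono:
  assumes x: "pos_vec x" and le: "\<And>k. x $ k \<le> y $ k"
  shows "f0 J f x $ i \<le> f0 J f y $ i"
proof (cases "i \<in> J")
  case True
  have "ext0 f (P0 J x) $ i \<le> ext0 f (P0 J y) $ i"
  proof (rule ext0_ge)
    fix e :: real assume e: "0 < e"
    have y: "pos_vec y" using x le unfolding pos_vec_def by (meson less_le_trans)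
    have "ext0 f (P0 J x) $ i \<le> f (P0 J x + e *\<^sub>R (\<chi> j. 1)) $ i"
      by (rule ext0_le[OF nonneg_P0[OF x] e])
    also have "\<dots> \<le> f (P0 J y + e *\<^sub>R (\<chi> j. 1)) $ i"
      using mono_nth[OF pos_vec_shift[OF nonneg_P0[OF x] e] pos_vec_shift[OF nonneg_P0[OF y] e]] le
      by (simp add: P0_def)
    finally show "ext0 f (P0 J x) $ i \<le> f (P0 J y + e *\<^sub>R (\<chi> j. 1)) $ i" .
  qed
  with True show ?thesis by (simp add: f0_nth)
qed (simp add: f0_nth)

lemma not_arc0_bounded_below:
  assumes "j \<notin> I" "\<not> arc0 f I j"
  shows "\<exists>c>0. \<forall>t. c \<le> f (\<chi> k. exp (- t * indicator I k)) $ j"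
proof (rule ccontr)
  define g where "g t = f (\<chi> k. exp (- t * indicator I k)) $ j" for t
  have g_pos: "0 < g t" for t unfolding g_def by (rule pos_nth) (simp add: pos_vec_def)
  have g_antimono: "g t' \<le> g t" if "t \<le> t'" for t t'
    unfolding g_def by (rule mono_nth) (use that in \<open>auto simp: pos_vec_def indicator_def\<close>)
  assume "\<not> (\<exists>c>0. \<forall>t. c \<le> g t)"
  then have small: "\<exists>t. g t < c" if "0 < c" for c using that by (meson not_le)
  have "(g \<longlongrightarrow> 0) at_top"
  proof (rule order_tendstoI)
    fix a :: real assume "a < 0"
    then show "eventually (\<lambda>t. a < g t) at_top" using g_pos by (meson always_eventually less_trans)
  next
    fix a :: real assume "0 < a"
    then obtain t0 where "g t0 < a" using small by blast
    then show "eventually (\<lambda>t. g t < a) at_top"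
      unfolding eventually_at_top_linorder using g_antimono by (meson le_less_trans)
  qed
  with assms show False by (simp add: arc0_def g_def[abs_def])
qed

lemma invariant_arc0_bounded_below:
  assumes "invariant_hg (arc0 f) S"
  shows "\<exists>c>0. \<forall>i t. i \<notin> S \<longrightarrow> c \<le> f (\<chi> k. exp (- t * indicator S k)) $ i"
proof -
  have "\<forall>i\<in>-S. \<exists>c. 0 < c \<and> (\<forall>t. c \<le> f (\<chi> k. exp (- t * indicator S k)) $ i)"
    using assms not_arc0_bounded_below unfolding invariant_hg_def by blast
  then obtain c where c: "\<forall>i\<in>-S. 0 < c i \<and> (\<forall>t. c i \<le> f (\<chi> k. exp (- t * indicator S k)) $ i)"
    by (rule bchoice[THEN exE])
  show ?thesis
    by (intro exI[of _ "Min (insert 1 (c ` (-S)))"])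
      (use c in \<open>auto intro: order_trans[OF Min_le]\<close>)
qed

lemma upper_cw_f0_pos_if_invariant:
  assumes "UNIV - J \<subseteq> S" and S: "invariant_hg (arc0 f) S" and "S \<noteq> UNIV"
  shows "0 < upper_cw (f0 J f)"
proof -
  obtain c where c: "0 < c" "\<And>i t. i \<notin> S \<Longrightarrow> c \<le> f (\<chi> k. exp (- t * indicator S k)) $ i"
    using invariant_arc0_bounded_below[OF S] by blast
  have "c \<le> upper_cw (f0 J f)"
  proof (rule upper_cw_ge)
    fix x :: "real^'n" assume x: "pos_vec x"
    obtain a where a: "a \<notin> S" "\<And>k. k \<notin> S \<Longrightarrow> x $ a \<le> x $ k"
      using ex_is_arg_min_if_finite[of "-S" "\<lambda>k. x $ k"] \<open>S \<noteq> UNIV\<close>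
      by (auto simp: is_arg_min_linorder)
    have "x $ a * c \<le> ext0 f (P0 J x) $ a"
    proof (rule ext0_ge_scaled[OF nonneg_P0[OF x]])
      show "0 < x $ a" using x by (simp add: pos_vec_def)
      show "x $ a \<le> P0 J x $ k" if "k \<notin> S" for k
        using a(2)[OF that] that \<open>UNIV - J \<subseteq> S\<close> by (auto simp: P0_def)
    qed (use c a in auto)
    then show "\<exists>i. c * x $ i \<le> f0 J f x $ i"
      using a(1) \<open>UNIV - J \<subseteq> S\<close> by (auto simp: f0_nth mult.commute)
  qed
  with c(1) show ?thesis by linarith
qed

lemma f0_le_arc0_vector:
  assumes x: "pos_vec x" and "0 \<le> t" and "\<And>k. x $ k \<le> 1/2"
    and "\<And>k. k \<in> I \<Longrightarrow> x $ k \<le> exp (- t) / 2"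
  shows "f0 J f x $ j \<le> f (\<chi> k. exp (- t * indicator I k)) $ j"
proof -
  have "f0 J f x $ j \<le> f (P0 J x + (exp (- t) / 2) *\<^sub>R (\<chi> k. 1)) $ j"
    by (rule f0_le_shift[OF x]) simp
  also have "\<dots> \<le> f (\<chi> k. exp (- t * indicator I k)) $ j"
  proof (rule mono_nth)
    show "pos_vec (P0 J x + (exp (- t) / 2) *\<^sub>R (\<chi> k. 1))"
      by (rule pos_vec_shift[OF nonneg_P0[OF x]]) simp
    show "pos_vec (\<chi> k. exp (- t * indicator I k))" by (simp add: pos_vec_def)
    fix k
    have P0_le: "P0 J x $ k \<le> x $ k" using x by (simp add: P0_def pos_vec_def less_imp_le)
    have lhs: "(P0 J x + (exp (- t) / 2) *\<^sub>R (\<chi> k. 1)) $ k = P0 J x $ k + exp (- t) / 2" by simp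
    have rhs: "(\<chi> k. exp (- t * indicator I k)) $ k = (if k \<in> I then exp (- t) else 1)" by simp
    show "(P0 J x + (exp (- t) / 2) *\<^sub>R (\<chi> k. 1)) $ k \<le> (\<chi> k. exp (- t * indicator I k)) $ k"
    proof (cases "k \<in> I")
      case True
      then show ?thesis unfolding lhs rhs using P0_le assms(4)[of k] by simp
    next
      case False
      have "exp (- t) \<le> 1" using \<open>0 \<le> t\<close> by simp
      then show ?thesis unfolding lhs rhs if_not_P[OF False] using P0_le assms(3)[of k] by linarith
    qed
  qed
  finally show ?thesis .
qed

lemma f0_vanishing_on_insert:
  assumes S: "f0_vanishing_on f J S" and arc: "arc0 f I j" and "I \<subseteq> S" "j \<notin> S"
  shows "f0_vanishing_on f J (insert j S)"
  unfolding f0_vanishing_on_def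
proof (intro allI impI)
  fix \<epsilon> \<delta> :: real assume \<epsilon>: "0 < \<epsilon>" and \<delta>: "0 < \<delta>"
  define d where "d = min \<delta> (1/2)"
  have d: "0 < d" "d \<le> \<delta>" "d \<le> 1/2" using \<delta> by (auto simp: d_def)
  obtain t where t: "0 \<le> t" "f (\<chi> k. exp (- t * indicator I k)) $ j < \<epsilon> * d"
    using arc0_smallE[OF arc mult_pos_pos[OF \<epsilon> d(1)]] by blast
  have \<delta>': "0 < min \<delta> (exp (- t) / 2)" using \<delta> by simp
  obtain x where x: "pos_vec x" "\<And>i. i \<notin> S \<Longrightarrow> x $ i = 1/2"
    and small: "\<And>i. i \<in> S \<Longrightarrow> x $ i \<le> min \<delta> (exp (- t) / 2) \<and> f0 J f x $ i \<le> \<epsilon> * x $ i"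
    using S[unfolded f0_vanishing_on_def, rule_format, OF \<epsilon> \<delta>'] by blast
  define x' :: "real^'n" where "x' = (\<chi> i. if i = j then d else x $ i)"
  have x': "pos_vec x'" using x(1) d by (simp add: x'_def pos_vec_def)
  have x'_le: "x' $ k \<le> x $ k" for k using x(2)[OF \<open>j \<notin> S\<close>] d by (simp add: x'_def)
  have x'_S: "x' $ k = x $ k" if "k \<in> S" for k using that \<open>j \<notin> S\<close> by (auto simp: x'_def)
  have x'_S_small: "x' $ k \<le> exp (- t) / 2" if "k \<in> S" for k
    using small[OF that] x'_S[OF that] by simp
  have "f0 J f x' $ j \<le> f (\<chi> k. exp (- t * indicator I k)) $ j"
  proof (rule f0_le_arc0_vector[OF x' t(1)])
    have exp_le: "exp (- t) / 2 \<le> 1/2" using t(1) by simp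
    show "x' $ k \<le> 1/2" for k
    proof (cases "k \<in> S")
      case True
      then show ?thesis using x'_S_small[OF True] exp_le by linarith
    next
      case False
      then show ?thesis using x(2)[of k] d by (simp add: x'_def)
    qed
    show "x' $ k \<le> exp (- t) / 2" if "k \<in> I" for k
      using that \<open>I \<subseteq> S\<close> x'_S_small by blast
  qed
  with t(2) d have j: "x' $ j \<le> \<delta> \<and> f0 J f x' $ j \<le> \<epsilon> * x' $ j" by (simp add: x'_def)
  have "x' $ i \<le> \<delta> \<and> f0 J f x' $ i \<le> \<epsilon> * x' $ i" if "i \<in> S" for i
    using f0_mono[OF x' x'_le, of J i] small[OF that] x'_S[OF that] by simp
  with j have "\<forall>i\<in>insert j S. x' $ i \<le> \<delta> \<and> f0 J f x' $ i \<le> \<epsilon> * x' $ i" by blast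
  moreover have "\<forall>i. i \<notin> insert j S \<longrightarrow> x' $ i = 1/2" using x(2) by (simp add: x'_def)
  ultimately show "\<exists>x. pos_vec x \<and> (\<forall>i. i \<notin> insert j S \<longrightarrow> x $ i = 1/2) \<and>
      (\<forall>i\<in>insert j S. x $ i \<le> \<delta> \<and> f0 J f x $ i \<le> \<epsilon> * x $ i)"
    using x' by blast
qed

lemma upper_cw_f0_eq_0_if_vanishing:
  assumes "f0_vanishing_on f J UNIV"
  shows "upper_cw (f0 J f) = 0"
proof (rule order.antisym)
  show "upper_cw (f0 J f) \<le> 0"
  proof (rule field_le_epsilon)
    fix \<epsilon> :: real assume "0 < \<epsilon>"
    obtain x where "pos_vec x" "\<And>i. f0 J f x $ i \<le> \<epsilon> * x $ i"
      using assms[unfolded f0_vanishing_on_def, rule_format, OF \<open>0 < \<epsilon>\<close> zero_less_one] by blast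
    then show "upper_cw (f0 J f) \<le> 0 + \<epsilon>"
      using upper_cw_le[of "f0 J f" x \<epsilon>] f0_nonneg by simp
  qed
  show "0 \<le> upper_cw (f0 J f)"
    by (rule upper_cw_ge) (simp add: f0_nonneg)
qed

lemma upper_cw_f0_eq_0_iff: "upper_cw (f0 J f) = 0 \<longleftrightarrow> reach_hg (UNIV - J) (arc0 f) = UNIV"
proof
  assume "upper_cw (f0 J f) = 0"
  show "reach_hg (UNIV - J) (arc0 f) = UNIV"
  proof (rule ccontr)
    assume "reach_hg (UNIV - J) (arc0 f) \<noteq> UNIV"
    then have "0 < upper_cw (f0 J f)"
      by (rule upper_cw_f0_pos_if_invariant[OF subset_reach_hg invariant_reach_hg])
    with \<open>upper_cw (f0 J f) = 0\<close> show False by simp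
  qed
next
  assume "reach_hg (UNIV - J) (arc0 f) = UNIV"
  then have "f0_vanishing_on f J UNIV"
    by (rule reach_hg_eq_UNIV_induct) (simp_all add: f0_vanishing_on_complement f0_vanishing_on_insert)
  then show "upper_cw (f0 J f) = 0" by (rule upper_cw_f0_eq_0_if_vanishing)
qed

end

lemma finf_nth:
  "finf L f x i = (if i \<in> L then ext_inf f (Pinf L (\<lambda>j. ereal (x $ j))) i else \<infinity>)"
  by (simp add: finf_def Pinf_def)

lemma trunc_vec_Pinf_nth:
  "trunc_vec (Pinf L (\<lambda>j. ereal (x $ j))) T $ k = (if k \<in> L then min (x $ k) T else T)"
  by (simp add: trunc_vec_def Pinf_def)

lemma trunc_vec_le: "trunc_vec y T $ k \<le> T"
  by (simp add: trunc_vec_def)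

lemma pos_trunc_vec:
  assumes "\<And>k. 0 < y k" and "0 < T"
  shows "pos_vec (trunc_vec y T)"
  unfolding pos_vec_def trunc_vec_def
proof
  fix k
  from assms(1)[of k] show "0 < (\<chi> j. if y j = \<infinity> then T else min (real_of_ereal (y j)) T) $ k"
    using assms(2) by (cases "y k") auto
qed

lemma arc_inf_largeE:
  assumes "arc_inf f I j"
  obtains t where "0 \<le> t" "a \<le> f (\<chi> k. exp (t * indicator I k)) $ j"
proof -
  have "filterlim (\<lambda>t. f (\<chi> k. exp (t * indicator I k)) $ j) at_top at_top"
    using assms by (simp add: arc_inf_def)
  then have "eventually (\<lambda>t. a \<le> f (\<chi> k. exp (t * indicator I k)) $ j) at_top"
    by (simp add: filterlim_at_top)
  then obtain N where N: "\<And>t. N \<le> t \<Longrightarrow> a \<le> f (\<chi> k. exp (t * indicator I k)) $ j"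
    unfolding eventually_at_top_linorder by blast
  have "N \<le> max N 0" "0 \<le> max N 0" by simp_all
  with N that show thesis by blast
qed


definition finf_diverging_on :: "(real^'n \<Rightarrow> real^'n) \<Rightarrow> 'n set \<Rightarrow> 'n set \<Rightarrow> bool" where
  "finf_diverging_on f L S \<longleftrightarrow> (\<forall>C D. \<exists>x. pos_vec x \<and> (\<forall>i. i \<notin> S \<longrightarrow> x $ i = 1) \<and>
     (\<forall>i\<in>S. D \<le> x $ i \<and> ereal (C * x $ i) \<le> finf L f x i))"

lemma finf_diverging_on_complement: "finf_diverging_on f L (UNIV - L)"
  unfolding finf_diverging_on_def
proof (intro allI)
  fix C D :: real
  show "\<exists>x. pos_vec x \<and> (\<forall>i. i \<notin> UNIV - L \<longrightarrow> x $ i = 1) \<and>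
      (\<forall>i\<in>UNIV - L. D \<le> x $ i \<and> ereal (C * x $ i) \<le> finf L f x i)"
    by (intro exI[of _ "\<chi> i. if i \<in> L then 1 else max D 1"]) (auto simp: pos_vec_def finf_nth)
qed

context order_preserving_homogeneous
begin

lemma finf_ge_trunc:
  assumes "0 < T"
  shows "ereal (f (trunc_vec (Pinf L (\<lambda>j. ereal (x $ j))) T) $ i) \<le> finf L f x i"
proof (cases "i \<in> L")
  case True
  have "ereal (f (trunc_vec (Pinf L (\<lambda>j. ereal (x $ j))) T) $ i)
      \<le> ext_inf f (Pinf L (\<lambda>j. ereal (x $ j))) i"
    unfolding ext_inf_def by (rule SUP_upper) (simp add: assms)
  with True show ?thesis by (simp add: finf_nth)
qed (simp add: finf_nth)

lemma finf_mono:
  assumes x: "pos_vec x" and le: "\<And>k. x $ k \<le> y $ k"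
  shows "finf L f x i \<le> finf L f y i"
proof (cases "i \<in> L")
  case True
  have y: "pos_vec y" using x le unfolding pos_vec_def by (meson less_le_trans)
  have "ext_inf f (Pinf L (\<lambda>j. ereal (x $ j))) i \<le> ext_inf f (Pinf L (\<lambda>j. ereal (y $ j))) i"
    unfolding ext_inf_def
  proof (rule SUP_mono)
    fix T :: real assume T: "T \<in> {0<..}"
    have "pos_vec (trunc_vec (Pinf L (\<lambda>j. ereal (z $ j))) T)" if "pos_vec z" for z
      using that T by (simp add: pos_vec_def trunc_vec_Pinf_nth)
    then have "f (trunc_vec (Pinf L (\<lambda>j. ereal (x $ j))) T) $ i
        \<le> f (trunc_vec (Pinf L (\<lambda>j. ereal (y $ j))) T) $ i"
      using mono_nth le x y by (simp add: trunc_vec_Pinf_nth min.coboundedI1 min_le_iff_disj)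
    with T show "\<exists>T'\<in>{0<..}. ereal (f (trunc_vec (Pinf L (\<lambda>j. ereal (x $ j))) T) $ i)
        \<le> ereal (f (trunc_vec (Pinf L (\<lambda>j. ereal (y $ j))) T') $ i)" by auto
  qed
  with True show ?thesis by (simp add: finf_nth)
qed (simp add: finf_nth)

lemma ext_inf_le_scaled:
  assumes y: "\<And>k. 0 < y k" and m: "0 < m" and y_le: "\<And>k. k \<notin> S \<Longrightarrow> y k \<le> ereal m"
    and c: "\<And>t. f (\<chi> k. exp (t * indicator S k)) $ i \<le> c"
  shows "ext_inf f y i \<le> ereal (m * c)"
  unfolding ext_inf_def
proof (rule SUP_least)
  fix T :: real assume "T \<in> {0<..}"
  then have T: "0 < T" by simp
  define w :: "real^'n" where "w = (\<chi> k. exp (ln (T / m) * indicator S k))"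
  have w: "pos_vec w" by (simp add: w_def pos_vec_def)
  have "f (trunc_vec y T) $ i \<le> f (m *\<^sub>R w) $ i"
  proof (rule mono_nth[OF pos_trunc_vec[OF y T]])
    show "pos_vec (m *\<^sub>R w)" using w m by (simp add: pos_vec_def)
    fix k
    show "trunc_vec y T $ k \<le> (m *\<^sub>R w) $ k"
    proof (cases "k \<in> S")
      case True
      then show ?thesis using trunc_vec_le[of y T k] m T by (simp add: w_def)
    next
      case False
      from y[of k] y_le[OF False] have "trunc_vec y T $ k \<le> m"
        by (cases "y k") (auto simp: trunc_vec_def)
      with False show ?thesis by (simp add: w_def)
    qed
  qed
  also have "\<dots> = m * f w $ i" by (rule homogeneous_nth[OF w m])
  also have "\<dots> \<le> m * c" using c[of "ln (T / m)"] m by (simp add: w_def)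
  finally show "ereal (f (trunc_vec y T) $ i) \<le> ereal (m * c)" by simp
qed

lemma not_arc_inf_bounded_above:
  assumes "j \<notin> I" "\<not> arc_inf f I j"
  shows "\<exists>c. \<forall>t. f (\<chi> k. exp (t * indicator I k)) $ j \<le> c"
proof (rule ccontr)
  define g where "g t = f (\<chi> k. exp (t * indicator I k)) $ j" for t
  have g_mono: "g t \<le> g t'" if "t \<le> t'" for t t'
    unfolding g_def by (rule mono_nth) (use that in \<open>auto simp: pos_vec_def indicator_def\<close>)
  assume "\<not> (\<exists>c. \<forall>t. g t \<le> c)"
  then have large: "\<exists>t. c < g t" for c by (meson not_le)
  have "filterlim g at_top at_top"
    unfolding filterlim_at_top
  proof
    fix c
    obtain t0 where "c < g t0" using large by blast
    then show "eventually (\<lambda>t. c \<le> g t) at_top"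
      unfolding eventually_at_top_linorder using g_mono by (meson less_imp_le order_trans)
  qed
  with assms show False by (simp add: arc_inf_def g_def[abs_def])
qed

lemma invariant_arc_inf_bounded_above:
  assumes "invariant_hg (arc_inf f) S"
  shows "\<exists>c. \<forall>i t. i \<notin> S \<longrightarrow> f (\<chi> k. exp (t * indicator S k)) $ i \<le> c"
proof -
  have "\<forall>i\<in>-S. \<exists>c. \<forall>t. f (\<chi> k. exp (t * indicator S k)) $ i \<le> c"
    using assms not_arc_inf_bounded_above unfolding invariant_hg_def by blast
  then obtain c where c: "\<forall>i\<in>-S. \<forall>t. f (\<chi> k. exp (t * indicator S k)) $ i \<le> c i"
    by (rule bchoice[THEN exE])
  have "c i \<le> Max (c ` (-S))" if "i \<notin> S" for i using that by (simp add: Max_ge)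
  with c show ?thesis by (meson ComplI order_trans)
qed

lemma lower_cw_finf_finite_if_invariant:
  assumes "UNIV - L \<subseteq> S" and S: "invariant_hg (arc_inf f) S" and "S \<noteq> UNIV"
  shows "lower_cw (finf L f) < \<infinity>"
proof -
  obtain c where c: "\<And>i t. i \<notin> S \<Longrightarrow> f (\<chi> k. exp (t * indicator S k)) $ i \<le> c"
    using invariant_arc_inf_bounded_above[OF S] by blast
  have "lower_cw (finf L f) \<le> ereal c"
  proof (rule lower_cw_le)
    fix x :: "real^'n" assume x: "pos_vec x"
    obtain b where b: "b \<notin> S" "\<And>k. k \<notin> S \<Longrightarrow> x $ k \<le> x $ b"
      using ex_is_arg_min_if_finite[of "-S" "\<lambda>k. - x $ k"] \<open>S \<noteq> UNIV\<close>
      by (auto simp: is_arg_min_linorder)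
    have "ext_inf f (Pinf L (\<lambda>j. ereal (x $ j))) b \<le> ereal (x $ b * c)"
    proof (rule ext_inf_le_scaled)
      show "0 < Pinf L (\<lambda>j. ereal (x $ j)) k" for k
        using x by (simp add: Pinf_def pos_vec_def)
      show "0 < x $ b" using x by (simp add: pos_vec_def)
      show "Pinf L (\<lambda>j. ereal (x $ j)) k \<le> ereal (x $ b)" if "k \<notin> S" for k
        using b(2)[OF that] that \<open>UNIV - L \<subseteq> S\<close> by (auto simp: Pinf_def)
    qed (use c b in auto)
    then show "\<exists>i. finf L f x i \<le> ereal (c * x $ i)"
      using b(1) \<open>UNIV - L \<subseteq> S\<close> by (auto simp: finf_nth mult.commute)
  qed
  then show ?thesis using le_less_trans by fastforce
qed

lemma arc_inf_vector_le_finf: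
  assumes "0 \<le> t" and "\<And>k. 1 \<le> x $ k" and "\<And>k. k \<in> I \<Longrightarrow> exp t \<le> x $ k"
  shows "ereal (f (\<chi> k. exp (t * indicator I k)) $ j) \<le> finf L f x j"
proof -
  have x: "pos_vec x" using assms(2) by (simp add: pos_vec_def less_le_trans[OF zero_less_one])
  have "f (\<chi> k. exp (t * indicator I k)) $ j \<le> f (trunc_vec (Pinf L (\<lambda>k. ereal (x $ k))) (exp t)) $ j"
  proof (rule mono_nth)
    show "pos_vec (\<chi> k. exp (t * indicator I k))" by (simp add: pos_vec_def)
    show "pos_vec (trunc_vec (Pinf L (\<lambda>k. ereal (x $ k))) (exp t))"
      using x by (simp add: pos_vec_def trunc_vec_Pinf_nth)
    fix k
    have "1 \<le> exp t" using \<open>0 \<le> t\<close> by simp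
    then show "(\<chi> k. exp (t * indicator I k)) $ k \<le> trunc_vec (Pinf L (\<lambda>k. ereal (x $ k))) (exp t) $ k"
      using assms(2,3)[of k] by (cases "k \<in> I") (auto simp: trunc_vec_Pinf_nth)
  qed
  also have "\<dots> \<le> finf L f x j" by (rule finf_ge_trunc) simp
  finally show ?thesis by simp
qed

lemma finf_diverging_on_insert:
  assumes S: "finf_diverging_on f L S" and arc: "arc_inf f I j" and "I \<subseteq> S" "j \<notin> S"
  shows "finf_diverging_on f L (insert j S)"
  unfolding finf_diverging_on_def
proof (intro allI)
  fix C D :: real
  define d where "d = max D 1"
  have d: "D \<le> d" "1 \<le> d" by (auto simp: d_def)
  obtain t where t: "0 \<le> t" "C * d \<le> f (\<chi> k. exp (t * indicator I k)) $ j"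
    using arc_inf_largeE[OF arc] by blast
  obtain x where x: "pos_vec x" "\<And>i. i \<notin> S \<Longrightarrow> x $ i = 1"
    and large: "\<And>i. i \<in> S \<Longrightarrow> max D (exp t) \<le> x $ i \<and> ereal (C * x $ i) \<le> finf L f x i"
    using S[unfolded finf_diverging_on_def, rule_format, where C = C and D = "max D (exp t)"] by blast
  define x' :: "real^'n" where "x' = (\<chi> i. if i = j then d else x $ i)"
  have x_le: "x $ k \<le> x' $ k" for k using x(2)[OF \<open>j \<notin> S\<close>] d by (simp add: x'_def)
  have x'_S: "x' $ k = x $ k" if "k \<in> S" for k using that \<open>j \<notin> S\<close> by (auto simp: x'_def)
  have x'_S_large: "exp t \<le> x' $ k" if "k \<in> S" for k
    using large[OF that] x'_S[OF that] by simp
  have x'_ge_1: "1 \<le> x' $ k" for k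
  proof (cases "k \<in> S")
    case True
    have "1 \<le> exp t" using t(1) by simp
    then show ?thesis using x'_S_large[OF True] by linarith
  next
    case False
    then show ?thesis using x(2)[of k] d by (simp add: x'_def)
  qed
  have x': "pos_vec x'" using x'_ge_1 by (simp add: pos_vec_def less_le_trans[OF zero_less_one])
  have "ereal (f (\<chi> k. exp (t * indicator I k)) $ j) \<le> finf L f x' j"
    by (rule arc_inf_vector_le_finf[OF t(1) x'_ge_1]) (use \<open>I \<subseteq> S\<close> x'_S_large in blast)
  with t(2) d have j: "D \<le> x' $ j \<and> ereal (C * x' $ j) \<le> finf L f x' j"
    by (simp add: x'_def order_trans[OF ereal_less_eq(3)[THEN iffD2]])
  have "D \<le> x' $ i \<and> ereal (C * x' $ i) \<le> finf L f x' i" if "i \<in> S" for i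
    using finf_mono[OF x(1) x_le, of L i] large[OF that] x'_S[OF that] by auto
  with j have "\<forall>i\<in>insert j S. D \<le> x' $ i \<and> ereal (C * x' $ i) \<le> finf L f x' i" by blast
  moreover have "\<forall>i. i \<notin> insert j S \<longrightarrow> x' $ i = 1" using x(2) by (simp add: x'_def)
  ultimately show "\<exists>x. pos_vec x \<and> (\<forall>i. i \<notin> insert j S \<longrightarrow> x $ i = 1) \<and>
      (\<forall>i\<in>insert j S. D \<le> x $ i \<and> ereal (C * x $ i) \<le> finf L f x i)"
    using x' by blast
qed

lemma lower_cw_finf_eq_infinity_if_diverging:
  assumes "finf_diverging_on f L UNIV"
  shows "lower_cw (finf L f) = \<infinity>"
proof (rule ereal_top)
  fix C :: real
  obtain x where "pos_vec x" "\<And>i. ereal (C * x $ i) \<le> finf L f x i"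
    using assms[unfolded finf_diverging_on_def, rule_format, where C = C and D = 0] by blast
  then show "ereal C \<le> lower_cw (finf L f)" by (rule lower_cw_ge)
qed

lemma lower_cw_finf_eq_infinity_iff:
  "lower_cw (finf L f) = \<infinity> \<longleftrightarrow> reach_hg (UNIV - L) (arc_inf f) = UNIV"
proof
  assume "lower_cw (finf L f) = \<infinity>"
  show "reach_hg (UNIV - L) (arc_inf f) = UNIV"
  proof (rule ccontr)
    assume "reach_hg (UNIV - L) (arc_inf f) \<noteq> UNIV"
    then have "lower_cw (finf L f) < \<infinity>"
      by (rule lower_cw_finf_finite_if_invariant[OF subset_reach_hg invariant_reach_hg])
    with \<open>lower_cw (finf L f) = \<infinity>\<close> show False by simp
  qed
next
  assume "reach_hg (UNIV - L) (arc_inf f) = UNIV"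
  then have "finf_diverging_on f L UNIV"
    by (rule reach_hg_eq_UNIV_induct) (simp_all add: finf_diverging_on_complement finf_diverging_on_insert)
  then show "lower_cw (finf L f) = \<infinity>" by (rule lower_cw_finf_eq_infinity_if_diverging)
qed

end

theorem lemma3p9:
  fixes f :: "real^'n \<Rightarrow> real^'n" and J :: "'n set"
  assumes "\<And>x. pos_vec x \<Longrightarrow> pos_vec (f x)"
    and "order_preserving_pos f"
    and "homogeneous_pos f"
  shows "((\<not> (\<exists>A. A \<noteq> {} \<and> A \<subseteq> J \<and> invariant_hg (arc0 f) (UNIV - A)))
            \<longleftrightarrow> reach_hg (UNIV - J) (arc0 f) = UNIV)
       \<and> (reach_hg (UNIV - J) (arc0 f) = UNIV \<longleftrightarrow> upper_cw (f0 J f) = 0)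
       \<and> ((\<not> (\<exists>B. B \<noteq> {} \<and> B \<subseteq> UNIV - J \<and> invariant_hg (arc_inf f) (UNIV - B)))
            \<longleftrightarrow> reach_hg J (arc_inf f) = UNIV)
       \<and> (reach_hg J (arc_inf f) = UNIV \<longleftrightarrow> lower_cw (finf (UNIV - J) f) = \<infinity>)"
proof -
  interpret order_preserving_homogeneous f
    by unfold_locales (fact assms)+
  have "UNIV - (UNIV - J) = J" by blast
  then show ?thesis
    using reach_hg_eq_UNIV_iff_no_invariant_complement[of J "arc0 f"]
      reach_hg_eq_UNIV_iff_no_invariant_complement[of "UNIV - J" "arc_inf f"]
      upper_cw_f0_eq_0_iff[of J] lower_cw_finf_eq_infinity_iff[of "UNIV - J"]
    by simp
qed

end
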